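(* Let $n \geq 1$. There is no closed $(n+1)$-dimensional manifold $M$ carrying a complete affine structure whose holonomy group $\mathrm{hol}(\pi_1(M)) \leq \mathrm{Aff}(n+1,\mathbb{R})$ is contained in the group $G$ of affine automorphisms of $\mathbb{A}^{n+1}$ preserving a fixed affine line $l \subset \mathbb{A}^{n+1}$. After choosing coordinates $\mathbb{A}^{n+1}\cong\mathbb{R}\times\mathbb{R}^n$ in which $l=\mathbb{R}\times\{0\}$, this group is $$G=\left\{ x\mapsto \begin{pmatrix} r & w\\ 0 & A\end{pmatrix}x+\begin{pmatrix} d\\ 0\end{pmatrix} \;:\; r\neq 0,\ d\in\mathbb{R},\ w^{T}\in\mathbb{R}^n,\ A\in \mathrm{GL}(n,\mathbb{R})\right\}.$$
   Context: An $m$-dimensional affine manifold is a smooth $m$-manifold $M$ with an atlas of charts $\Phi_\alpha:U_\alpha\to\mathbb{A}^m$ (diffeomorphisms onto open subsets of affine space) such that on each connected component of each overlap $U_\alpha\cap U_\beta$ the transition map $\Phi_\beta\circ\Phi_\alpha^{-1}$ is the restriction of an affine automorphism of $\mathbb{A}^m$. Such a structure determines a developing pair $(\mathrm{dev},\mathrm{hol})$: a local diffeomorphism $\mathrm{dev}:\widetilde M\to\mathbb{A}^m$ from the universal cover, obtained by analytically continuing a chart along paths, and a homomorphism $\mathrm{hol}:\Gamma=\pi_1(M,p)\to\mathrm{Aff}(m,\mathbb{R})$ (the holonomy) such that $\mathrm{dev}\circ\gamma=\mathrm{hol}(\gamma)\circ\mathrm{dev}$ for every deck transformation $\gamma\in\Gamma$.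 The image $\mathrm{hol}(\Gamma)$ is the holonomy group. A closed affine manifold is called complete if $\mathrm{dev}$ is a covering map onto $\mathbb{A}^m$ (equivalently, a diffeomorphism onto $\mathbb{A}^m$). *)

theory Defs
  imports "HOL-Analysis.Analysis"
begin

definition aff_auto :: "(real^'n \<Rightarrow> real^'n) \<Rightarrow> bool" where
  "aff_auto f \<longleftrightarrow> (\<exists>(A::real^'n^'n) b. invertible A \<and> f = (\<lambda>x. A *v x + b))"

definition affine_line :: "(real^'n) set \<Rightarrow> bool" where
  "affine_line l \<longleftrightarrow> (\<exists>a v. v \<noteq> 0 \<and> l = {a + t *\<^sub>R v | t. True})"

definition line_stabilizer :: "(real^'n) set \<Rightarrow> (real^'n \<Rightarrow> real^'n) set" where
  "line_stabilizer l = {f. aff_auto f \<and> f ` l = l}"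

definition affine_atlas :: "('m::topological_space set \<times> ('m \<Rightarrow> real^'n)) set \<Rightarrow> bool" where
  "affine_atlas atlas \<longleftrightarrow>
     (\<forall>(U,\<phi>)\<in>atlas. open U \<and> open (\<phi> ` U) \<and> (\<exists>\<psi>. homeomorphism U (\<phi> ` U) \<phi> \<psi>)) \<and>
     \<Union>(fst ` atlas) = UNIV \<and>
     (\<forall>(U,\<phi>)\<in>atlas. \<forall>(V,\<psi>)\<in>atlas. \<forall>C \<in> components (U \<inter> V).
        \<exists>f. aff_auto f \<and> (\<forall>x\<in>C. \<psi> x = f (\<phi> x)))"

text \<open>A closed manifold: compact, Hausdorff, second countable (the charts of an atlas
  make it locally Euclidean).\<close>
definition closed_manifold_space :: "'m::topological_space itself \<Rightarrow> bool" where
  "closed_manifold_space _ \<longleftrightarrow>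
     compact (UNIV::'m set) \<and>
     (\<forall>x y::'m. x \<noteq> y \<longrightarrow> (\<exists>U V. open U \<and> open V \<and> x \<in> U \<and> y \<in> V \<and> U \<inter> V = {})) \<and>
     (\<exists>B::'m set set. countable B \<and> topological_basis B)"

text \<open>A developing covering for a complete affine structure: a covering map
  p : real^'n \<rightarrow> M which in every chart is locally an affine automorphism.
  (For a complete structure, p = \<pi> \<circ> dev^{-1}, with \<pi> the universal covering.)\<close>
definition complete_developing_cover ::
  "('m::topological_space set \<times> ('m \<Rightarrow> real^'n)) set \<Rightarrow> (real^'n \<Rightarrow> 'm) \<Rightarrow> bool" where
  "complete_developing_cover atlas p \<longleftrightarrow>
     covering_space UNIV p UNIV \<and>
     (\<forall>(U,\<phi>)\<in>atlas. \<forall>x. p x \<in> U \<longrightarrow>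
        (\<exists>W. open W \<and> x \<in> W \<and> p ` W \<subseteq> U \<and>
             (\<exists>f. aff_auto f \<and> (\<forall>y\<in>W. \<phi> (p y) = f y))))"

text \<open>The holonomy group = the deck transformation group of the developing cover p
  (identified with \<pi>_1(M) acting on the universal cover via dev).\<close>
definition holonomy_group :: "(real^'n \<Rightarrow> 'm::topological_space) \<Rightarrow> (real^'n \<Rightarrow> real^'n) set" where
  "holonomy_group p = {g. (\<exists>h. homeomorphism UNIV UNIV g h) \<and> p \<circ> g = p}"

end

theory Submission
  imports Defs
begin

text \<open>
  The holonomy group \<open>\<Gamma>\<close> is the deck group of the covering \<open>p : \<real>\<^sup>n\<^sup>+\<^sup>1 \<rightarrow> M\<close>, so it acts
  freely; as it preserves the line \<open>a + \<real> v\<close>, every \<open>g \<in> \<Gamma>\<close> translates that line by some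
  amount \<open>line_shift g\<close>, and \<open>line_shift\<close> is a homomorphism \<open>\<Gamma> \<rightarrow> \<real>\<close>. If \<open>M\<close> were compact,
  the \<open>\<Gamma>\<close>-translates of a ball \<open>K\<close> would cover \<open>\<real>\<^sup>n\<^sup>+\<^sup>1\<close>, and \<open>\<Gamma>\<close> would act properly
  discontinuously. Then translates of \<open>K\<close> that meet have shifts differing by a bounded amount,
  and the translates of bounded shift stay in a bounded set. Hence the complement of a large
  ball is covered by the translates of large positive shift and those of large negative shift:
  two disjoint closed sets, both met by the line. This disconnects the complement of a ball in
  \<open>\<real>\<^sup>n\<^sup>+\<^sup>1\<close>, which is impossible as soon as \<open>n + 1 \<ge> 2\<close>.
\<close>

section \<open>Lifting through a covering of an arbitrary space\<close>

lemma homeomorphism_pullback_sheet: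
  assumes q: "homeomorphism u T p q" and "u \<subseteq> C"
    and "V \<subseteq> U" and contf: "continuous_on V f" and fV: "f ` V \<subseteq> T"
  shows "homeomorphism ({z \<in> U \<times> C. f (fst z) = p (snd z)} \<inter> (V \<times> u)) V fst (\<lambda>w. (w, q (f w)))"
    (is "homeomorphism ?s V fst ?lift")
proof (rule homeomorphismI)
  show "continuous_on ?s fst"
    by (intro continuous_intros)
  have "continuous_on T q"
    using q by (simp add: homeomorphism_def)
  then have "continuous_on V (q \<circ> f)"
    by (rule continuous_on_compose[OF contf continuous_on_subset[OF _ fV]])
  then show "continuous_on V ?lift"
    by (intro continuous_intros) (simp add: o_def)
  show "fst ` ?s \<subseteq> V"
    by auto
  show "?lift ` V \<subseteq> ?s"
  proof
    fix z assume "z \<in> ?lift ` V"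
    then obtain w where "w \<in> V" "z = ?lift w"
      by blast
    then have "q (f w) \<in> u" "p (q (f w)) = f w"
      using q fV by (auto simp: homeomorphism_def)
    then show "z \<in> ?s"
      using \<open>w \<in> V\<close> \<open>z = ?lift w\<close> assms(2,3) by auto
  qed
  show "?lift (fst z) = z" if z: "z \<in> ?s" for z
  proof -
    obtain w c where "z = (w, c)" "c \<in> u" "f w = p c"
      using z by auto
    then show ?thesis
      using q by (simp add: homeomorphism_def)
  qed
  show "fst (?lift w) = w" for w
    by simp
qed

lemma covering_space_pullback:
  assumes cov: "covering_space C p S"
    and contf: "continuous_on U f" and fim: "f ` U \<subseteq> S"
  shows "covering_space {z \<in> U \<times> C. f (fst z) = p (snd z)} fst U"
proof
  let ?P = "{z \<in> U \<times> C. f (fst z) = p (snd z)}"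
  show "continuous_on ?P fst"
    by (intro continuous_intros)
  have "x \<in> fst ` ?P" if "x \<in> U" for x
  proof -
    obtain c where "c \<in> C" "p c = f x"
      using cov fim \<open>x \<in> U\<close> covering_space_imp_surjective by (metis image_iff subsetD)
    then show ?thesis
      using \<open>x \<in> U\<close> by (force intro: image_eqI[of _ _ "(x, c)"])
  qed
  then show "fst ` ?P = U"
    by auto
  fix x assume "x \<in> U"
  then have "f x \<in> S"
    using fim by blast
  then obtain T \<V> where "f x \<in> T" and T: "openin (top_of_set S) T"
    and \<V>: "\<Union>\<V> = C \<inter> p -` T" "\<And>u. u \<in> \<V> \<Longrightarrow> openin (top_of_set C) u"
      "pairwise disjnt \<V>" "\<And>u. u \<in> \<V> \<Longrightarrow> \<exists>q. homeomorphism u T p q"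
    using cov unfolding covering_space_def by meson
  define V where "V = U \<inter> f -` T"
  define sheet where "sheet u = ?P \<inter> (V \<times> u)" for u
  have V: "openin (top_of_set U) V"
    unfolding V_def using contf fim T by (intro continuous_openin_preimage) auto
  show "\<exists>T. x \<in> T \<and> openin (top_of_set U) T \<and>
          (\<exists>\<V>. \<Union>\<V> = ?P \<inter> fst -` T \<and> (\<forall>u\<in>\<V>. openin (top_of_set ?P) u) \<and>
               pairwise disjnt \<V> \<and> (\<forall>u\<in>\<V>. \<exists>q. homeomorphism u T fst q))"
  proof (intro exI conjI)
    show "x \<in> V"
      using \<open>x \<in> U\<close> \<open>f x \<in> T\<close> by (simp add: V_def)
    show "openin (top_of_set U) V"
      by (fact V)
    show "\<Union>(sheet ` \<V>) = ?P \<inter> fst -` V"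
      using \<V>(1) by (fastforce simp: sheet_def V_def)
    show "\<forall>s\<in>sheet ` \<V>. openin (top_of_set ?P) s"
    proof
      fix s assume "s \<in> sheet ` \<V>"
      then obtain u where "u \<in> \<V>" "s = sheet u"
        by blast
      obtain O1 O2 where "open O1" "V = U \<inter> O1" "open O2" "u = C \<inter> O2"
        using V \<V>(2)[OF \<open>u \<in> \<V>\<close>] by (meson openin_open)
      then have "s = ?P \<inter> (O1 \<times> O2)"
        by (auto simp: \<open>s = sheet u\<close> sheet_def)
      then show "openin (top_of_set ?P) s"
        using \<open>open O1\<close> \<open>open O2\<close> by (simp add: openin_open_Int open_Times)
    qed
    show "pairwise disjnt (sheet ` \<V>)"
      using \<V>(3) by (fastforce simp: pairwise_def disjnt_def sheet_def)
    show "\<forall>s\<in>sheet ` \<V>. \<exists>q. homeomorphism s V fst q"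
    proof
      fix s assume "s \<in> sheet ` \<V>"
      then obtain u where "u \<in> \<V>" "s = sheet u"
        by blast
      then obtain q where "homeomorphism u T p q"
        using \<V>(4) by blast
      moreover have "u \<subseteq> C"
        using \<V>(1) \<open>u \<in> \<V>\<close> by blast
      moreover have "V \<subseteq> U" "f ` V \<subseteq> T"
        by (auto simp: V_def)
      moreover have "continuous_on V f"
        using contf by (rule continuous_on_subset) (simp add: V_def)
      ultimately have "homeomorphism s V fst (\<lambda>w. (w, q (f w)))"
        unfolding \<open>s = sheet u\<close> sheet_def by (intro homeomorphism_pullback_sheet)
      then show "\<exists>q. homeomorphism s V fst q"
        by blast
    qed
  qed
qed

text \<open>
  The library's lifting theorems require a normed base space. Lifting the identity of \<open>U\<close>
  through the pullback of \<open>p\<close> along \<open>f\<close>, whose base is \<open>U\<close> itself, removes that restriction.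
\<close>

lemma covering_space_lift_simply_connected:
  fixes p :: "'a::real_normed_vector \<Rightarrow> 'b::topological_space"
    and f :: "'c::real_normed_vector \<Rightarrow> 'b"
  assumes cov: "covering_space C p S" and "a \<in> C" "z \<in> U"
    and "simply_connected U" "locally path_connected U"
    and contf: "continuous_on U f" and fim: "f ` U \<subseteq> S" and "f z = p a"
  obtains g where "continuous_on U g" "g ` U \<subseteq> C" "g z = a" "\<And>y. y \<in> U \<Longrightarrow> p (g y) = f y"
proof -
  let ?P = "{w \<in> U \<times> C. f (fst w) = p (snd w)}"
  obtain s where s: "continuous_on U s" "s \<in> U \<rightarrow> ?P" "s z = (z, a)" "\<And>y. y \<in> U \<Longrightarrow> fst (s y) = y"
    by (rule covering_space_lift_strong[OF covering_space_pullback[OF cov contf fim], of "(z, a)" z U id])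
      (use assms in \<open>auto intro: continuous_on_id\<close>)
  show thesis
  proof (rule that[of "snd \<circ> s"])
    show "continuous_on U (snd \<circ> s)"
      using s(1) by (intro continuous_on_compose continuous_intros)
    show "(snd \<circ> s) ` U \<subseteq> C"
      using s(2) by force
    show "(snd \<circ> s) z = a"
      using s(3) by simp
    show "p ((snd \<circ> s) y) = f y" if "y \<in> U" for y
    proof -
      have "f (fst (s y)) = p (snd (s y))"
        using s(2) that by blast
      then show ?thesis
        using s(4)[OF that] by simp
    qed
  qed
qed

lemma covering_space_UNIV_open_map:
  assumes cov: "covering_space UNIV p UNIV" and "open S"
  shows "open (p ` S)"
proof (subst open_subopen, intro ballI)
  fix y assume "y \<in> p ` S"
  then obtain x where "x \<in> S" "y = p x"
    by blast
  obtain T V q where "x \<in> T" "openin (top_of_set UNIV) T" "p x \<in> V" "openin (top_of_set UNIV) V"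
    and hom: "homeomorphism T V p q"
    by (rule covering_space_local_homeomorphism[OF cov UNIV_I])
  then have "open T" "open V"
    by simp_all
  have "openin (top_of_set V) (p ` (T \<inter> S))"
    using hom \<open>open T\<close> \<open>open S\<close> by (intro homeomorphism_imp_open_map[OF hom]) (auto intro: openin_open_Int)
  then have "open (p ` (T \<inter> S))"
    using \<open>open V\<close> openin_open_trans by blast
  then show "\<exists>W. open W \<and> y \<in> W \<and> W \<subseteq> p ` S"
    using \<open>x \<in> T\<close> \<open>x \<in> S\<close> \<open>y = p x\<close> by blast
qed

section \<open>Deck transformations of a covering by Euclidean space\<close>

locale euclidean_covering =
  fixes p :: "real^'n::finite \<Rightarrow> 'm::topological_space"
  assumes covering: "covering_space UNIV p UNIV"
begin

abbreviation \<Gamma> where "\<Gamma> \<equiv> holonomy_group p"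

lemma continuous_on_p: "continuous_on UNIV p"
  using covering covering_space_imp_continuous by blast

lemma lift_exists:
  assumes "p x = p y"
  obtains g where "continuous_on UNIV g" "g x = y" "\<And>w. p (g w) = p w"
proof -
  obtain g where "continuous_on UNIV g" "g ` UNIV \<subseteq> UNIV" "g x = y" "\<And>w. w \<in> UNIV \<Longrightarrow> p (g w) = p w"
    by (rule covering_space_lift_simply_connected[OF covering, where a = y and z = x and U = UNIV and f = p])
      (use assms continuous_on_p in \<open>auto simp: convex_imp_simply_connected locally_path_connected_UNIV\<close>)
  with that show thesis
    by blast
qed

lemma lift_unique:
  assumes "continuous_on UNIV g" "continuous_on UNIV h"
    and "\<And>w. p (g w) = p w" "\<And>w. p (h w) = p w" and "g x = h x"
  shows "g = h"
proof
  fix z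
  show "g z = h z"
    by (rule covering_space_lift_unique[OF covering, of g x h UNIV p z]) (use assms continuous_on_p in auto)
qed

lemma holonomy_group_iff:
  "g \<in> \<Gamma> \<longleftrightarrow> (\<exists>h. homeomorphism UNIV UNIV g h) \<and> (\<forall>w. p (g w) = p w)"
  by (auto simp: holonomy_group_def fun_eq_iff)

lemma deck_continuous: "g \<in> \<Gamma> \<Longrightarrow> continuous_on S g"
  by (metis holonomy_group_iff homeomorphism_def continuous_on_subset subset_UNIV)

lemma p_deck [simp]: "g \<in> \<Gamma> \<Longrightarrow> p (g w) = p w"
  by (simp add: holonomy_group_iff)

lemma deck_eqI: "g \<in> \<Gamma> \<Longrightarrow> h \<in> \<Gamma> \<Longrightarrow> g x = h x \<Longrightarrow> g = h"
  by (rule lift_unique[where x = x]) (simp_all add: deck_continuous)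

lemma id_in_holonomy_group: "id \<in> \<Gamma>"
proof -
  have "homeomorphism UNIV UNIV id id"
    by (simp add: homeomorphism_def)
  then show ?thesis
    by (auto simp: holonomy_group_iff)
qed

lemma deck_fixpoint_imp_id: "g \<in> \<Gamma> \<Longrightarrow> g x = x \<Longrightarrow> g = id"
  using deck_eqI[OF _ id_in_holonomy_group] by simp

lemma deck_comp:
  assumes "g \<in> \<Gamma>" "h \<in> \<Gamma>"
  shows "g \<circ> h \<in> \<Gamma>"
proof -
  obtain g' h' where "homeomorphism UNIV UNIV g g'" "homeomorphism UNIV UNIV h h'"
    using assms by (auto simp: holonomy_group_iff)
  then have "homeomorphism UNIV UNIV (g \<circ> h) (h' \<circ> g')"
    by (intro homeomorphism_compose)
  with assms show ?thesis
    by (auto simp: holonomy_group_iff)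
qed

lemma deck_inv:
  assumes "g \<in> \<Gamma>"
  shows "inv g \<in> \<Gamma>" "inv g (g x) = x" "g (inv g x) = x"
proof -
  obtain h where hom: "homeomorphism UNIV UNIV g h"
    using assms by (auto simp: holonomy_group_iff)
  then have "inv g = h"
    by (intro inv_equality) (auto simp: homeomorphism_def)
  then have "homeomorphism UNIV UNIV (inv g) g"
    using hom by (simp add: homeomorphism_symD)
  moreover have "p (inv g w) = p w" for w
    using \<open>inv g = h\<close> hom p_deck[OF assms, of "h w"] by (simp add: homeomorphism_def)
  ultimately show "inv g \<in> \<Gamma>"
    by (auto simp: holonomy_group_iff)
  show "inv g (g x) = x" "g (inv g x) = x"
    using \<open>inv g = h\<close> hom by (auto simp: homeomorphism_def)
qed

lemma deck_open_image:
  assumes "g \<in> \<Gamma>" "open S"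
  shows "open (g ` S)"
proof -
  obtain h where "homeomorphism UNIV UNIV g h"
    using assms(1) by (auto simp: holonomy_group_iff)
  then show ?thesis
    using assms(2) by (metis homeomorphism_imp_open_map open_openin subtopology_UNIV)
qed

lemma deck_transitive_on_fibres:
  assumes "p x = p y"
  obtains g where "g \<in> \<Gamma>" "g x = y"
proof -
  obtain g where g: "continuous_on UNIV g" "g x = y" "\<And>w. p (g w) = p w"
    using lift_exists[OF assms] by blast
  obtain h where h: "continuous_on UNIV h" "h y = x" "\<And>w. p (h w) = p w"
    using lift_exists[OF assms[symmetric]] by blast
  have cont: "continuous_on UNIV (h \<circ> g)" "continuous_on UNIV (g \<circ> h)"
    using g(1) h(1) by (metis continuous_on_compose continuous_on_subset subset_UNIV)+
  have "h \<circ> g = id"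
    by (rule lift_unique[where x = x]) (use g h cont in \<open>simp_all add: continuous_on_id\<close>)
  moreover have "g \<circ> h = id"
    by (rule lift_unique[where x = y]) (use g h cont in \<open>simp_all add: continuous_on_id\<close>)
  ultimately have "homeomorphism UNIV UNIV g h"
    using g h by (intro homeomorphismI) (auto simp: fun_eq_iff)
  then have "g \<in> \<Gamma>"
    using g by (auto simp: holonomy_group_iff)
  with g that show thesis
    by blast
qed

lemma deck_locally_free:
  obtains W where "open W" "x \<in> W" "\<And>g. g \<in> \<Gamma> \<Longrightarrow> g ` W \<inter> W \<noteq> {} \<Longrightarrow> g = id"
proof -
  obtain W V q where "x \<in> W" "openin (top_of_set UNIV) W" "p x \<in> V" "openin (top_of_set UNIV) V"
    and hom: "homeomorphism W V p q"
    by (rule covering_space_local_homeomorphism[OF covering UNIV_I])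
  then have "open W"
    by simp
  have "g = id" if "g \<in> \<Gamma>" "w \<in> W" "g w \<in> W" for g w
  proof -
    have "g w = q (p (g w))"
      using hom \<open>g w \<in> W\<close> by (simp add: homeomorphism_def)
    also have "\<dots> = w"
      using hom \<open>w \<in> W\<close> \<open>g \<in> \<Gamma>\<close> by (simp add: homeomorphism_def)
    finally show ?thesis
      using deck_fixpoint_imp_id that(1) by blast
  qed
  with \<open>x \<in> W\<close> \<open>open W\<close> that show thesis
    by blast
qed

lemma compact_imp_image_of_cball:
  assumes "compact (UNIV :: 'm set)"
  obtains R where "p ` cball 0 R = UNIV"
proof -
  have cover: "UNIV \<subseteq> (\<Union>k\<in>UNIV. p ` ball 0 (real k))"
  proof
    fix y
    obtain x where "y = p x"
      using covering covering_space_imp_surjective by blast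
    moreover obtain k :: nat where "norm x < real k"
      using reals_Archimedean2 by blast
    ultimately have "y \<in> p ` ball 0 (real k)"
      by (simp add: dist_norm)
    then show "y \<in> (\<Union>k\<in>UNIV. p ` ball 0 (real k))"
      by blast
  qed
  have "open (p ` ball 0 (real k))" for k
    using covering_space_UNIV_open_map[OF covering] by simp
  then obtain C where "C \<subseteq> UNIV" "finite C" and C: "UNIV \<subseteq> (\<Union>k\<in>C. p ` ball 0 (real k))"
    using compactE_image[OF assms _ cover] by metis
  define R where "R = real (Max (insert 0 C))"
  have "p ` ball 0 (real k) \<subseteq> p ` cball 0 R" if "k \<in> C" for k
  proof -
    have "real k \<le> R"
      using that \<open>finite C\<close> by (simp add: R_def)
    then show ?thesis
      by (intro image_mono) auto
  qed
  then have "(\<Union>k\<in>C. p ` ball 0 (real k)) \<subseteq> p ` cball 0 R"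
    by (rule UN_least)
  with C have "p ` cball 0 R = UNIV"
    by blast
  then show thesis
    by (rule that)
qed

lemma compact_imp_translates_of_cball_cover:
  assumes "compact (UNIV :: 'm set)"
  obtains R where "\<forall>x. \<exists>g\<in>\<Gamma>. x \<in> g ` cball 0 R"
proof -
  obtain R where onto: "p ` cball 0 R = UNIV"
    using compact_imp_image_of_cball[OF assms] by blast
  have "\<exists>g\<in>\<Gamma>. x \<in> g ` cball 0 R" for x
  proof -
    have "p x \<in> p ` cball 0 R"
      using onto by simp
    then obtain k where "k \<in> cball 0 R" "p k = p x"
      by (metis imageE)
    moreover obtain g where "g \<in> \<Gamma>" "g k = x"
      using deck_transitive_on_fibres[OF \<open>p k = p x\<close>] by blast
    ultimately show ?thesis
      by blast
  qed
  with that show thesis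
    by blast
qed

end

section \<open>Proper discontinuity\<close>

locale hausdorff_euclidean_covering = euclidean_covering p
  for p :: "real^'n::finite \<Rightarrow> 'm::topological_space" +
  assumes hausdorff: "\<forall>x y::'m. x \<noteq> y \<longrightarrow> (\<exists>U V. open U \<and> open V \<and> x \<in> U \<and> y \<in> V \<and> U \<inter> V = {})"
begin

definition decks_with_graph_meeting :: "((real^'n) \<times> (real^'n)) set \<Rightarrow> (real^'n \<Rightarrow> real^'n) set" where
  "decks_with_graph_meeting N = {g \<in> \<Gamma>. \<exists>w. (w, g w) \<in> N}"

lemma deck_graphs_locally_finite:
  obtains N where "open N" "z \<in> N" "finite (decks_with_graph_meeting N)"
proof (cases "p (fst z) = p (snd z)")
  case True
  then obtain h where h: "h \<in> \<Gamma>" "h (fst z) = snd z"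
    by (rule deck_transitive_on_fibres)
  obtain W where W: "open W" "fst z \<in> W" and free: "\<And>g. g \<in> \<Gamma> \<Longrightarrow> g ` W \<inter> W \<noteq> {} \<Longrightarrow> g = id"
    using deck_locally_free[of "fst z"] by metis
  have "open (W \<times> h ` W)"
    using W h by (simp add: open_Times deck_open_image)
  moreover have "z \<in> W \<times> h ` W"
    using W h by (metis imageI mem_Times_iff)
  moreover have "decks_with_graph_meeting (W \<times> h ` W) \<subseteq> {h}"
  proof
    fix g assume "g \<in> decks_with_graph_meeting (W \<times> h ` W)"
    then obtain w w' where "g \<in> \<Gamma>" "w \<in> W" "w' \<in> W" "g w = h w'"
      by (auto simp: decks_with_graph_meeting_def)
    then have "(inv h \<circ> g) w = w'"
      using deck_inv(2)[OF h(1)] by simp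
    then have "inv h \<circ> g = id"
      using free[OF deck_comp[OF deck_inv(1)[OF h(1)] \<open>g \<in> \<Gamma>\<close>]] \<open>w \<in> W\<close> \<open>w' \<in> W\<close> by blast
    then show "g \<in> {h}"
      using deck_inv(3)[OF h(1)] by (metis comp_apply id_apply ext singletonI)
  qed
  then have "finite (decks_with_graph_meeting (W \<times> h ` W))"
    by (rule finite_subset) simp
  ultimately show thesis
    by (rule that)
next
  case False
  then obtain U V where "open U" "open V" "p (fst z) \<in> U" "p (snd z) \<in> V" "U \<inter> V = {}"
    using hausdorff by metis
  have "open (p -` U \<times> p -` V)"
    using \<open>open U\<close> \<open>open V\<close> continuous_on_p by (auto intro: open_vimage open_Times)
  moreover have "z \<in> p -` U \<times> p -` V"
    using \<open>p (fst z) \<in> U\<close> \<open>p (snd z) \<in> V\<close> by (simp add: mem_Times_iff)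
  moreover have "decks_with_graph_meeting (p -` U \<times> p -` V) = {}"
    using \<open>U \<inter> V = {}\<close> by (auto simp: decks_with_graph_meeting_def)
  then have "finite (decks_with_graph_meeting (p -` U \<times> p -` V))"
    by (metis finite.emptyI)
  ultimately show thesis
    by (rule that)
qed

lemma deck_properly_discontinuous:
  assumes "compact K"
  shows "finite {g \<in> \<Gamma>. g ` K \<inter> K \<noteq> {}}"
proof -
  let ?\<N> = "{N. open N \<and> finite (decks_with_graph_meeting N)}"
  have "K \<times> K \<subseteq> \<Union>?\<N>"
  proof
    fix z assume "z \<in> K \<times> K"
    obtain N where "open N" "z \<in> N" "finite (decks_with_graph_meeting N)"
      by (rule deck_graphs_locally_finite)
    then show "z \<in> \<Union>?\<N>"
      by blast
  qed
  then obtain \<N> where "\<N> \<subseteq> ?\<N>" "finite \<N>" and \<N>: "K \<times> K \<subseteq> \<Union>\<N>"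
    using compactE[OF compact_Times[OF assms assms]] by (metis (no_types, lifting) mem_Collect_eq)
  have "{g \<in> \<Gamma>. g ` K \<inter> K \<noteq> {}} \<subseteq> (\<Union>N\<in>\<N>. decks_with_graph_meeting N)"
  proof
    fix g assume "g \<in> {g \<in> \<Gamma>. g ` K \<inter> K \<noteq> {}}"
    then obtain k where "g \<in> \<Gamma>" "k \<in> K" "g k \<in> K"
      by blast
    then obtain N where "N \<in> \<N>" "(k, g k) \<in> N"
      using \<N> by blast
    with \<open>g \<in> \<Gamma>\<close> show "g \<in> (\<Union>N\<in>\<N>. decks_with_graph_meeting N)"
      by (auto simp: decks_with_graph_meeting_def)
  qed
  moreover have "finite (\<Union>N\<in>\<N>. decks_with_graph_meeting N)"
    using \<open>finite \<N>\<close> \<open>\<N> \<subseteq> ?\<N>\<close> by auto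
  ultimately show ?thesis
    by (rule finite_subset)
qed

lemma compact_Union_deck_translates:
  assumes "compact K" "finite F" "F \<subseteq> \<Gamma>"
  shows "compact (\<Union>g\<in>F. g ` K)"
  using assms by (intro compact_UN) (auto intro: compact_continuous_image deck_continuous)

lemma closed_Union_deck_translates:
  assumes "compact K" "F \<subseteq> \<Gamma>"
  shows "closed (\<Union>g\<in>F. g ` K)"
proof -
  let ?S = "\<Union>g\<in>F. g ` K"
  have "y \<in> ?S" if "y \<in> closure ?S" for y
  proof -
    define F' where "F' = {g \<in> F. g ` K \<inter> ball y 1 \<noteq> {}}"
    have sub: "F' \<subseteq> {g \<in> \<Gamma>. g ` (K \<union> cball y 1) \<inter> (K \<union> cball y 1) \<noteq> {}}"
    proof
      fix g assume "g \<in> F'"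
      then have "g \<in> \<Gamma>" "g ` K \<inter> ball y 1 \<noteq> {}"
        using \<open>F \<subseteq> \<Gamma>\<close> by (auto simp: F'_def)
      then obtain k where "k \<in> K" "g k \<in> ball y 1"
        by blast
      then have "g k \<in> g ` (K \<union> cball y 1) \<inter> (K \<union> cball y 1)"
        by auto
      with \<open>g \<in> \<Gamma>\<close> show "g \<in> {g \<in> \<Gamma>. g ` (K \<union> cball y 1) \<inter> (K \<union> cball y 1) \<noteq> {}}"
        by (simp only: mem_Collect_eq) blast
    qed
    have "compact (K \<union> cball y 1)"
      using \<open>compact K\<close> by (intro compact_Un) simp_all
    with sub have "finite F'"
      by (rule finite_subset[OF _ deck_properly_discontinuous])
    then have closed: "closed (\<Union>g\<in>F'. g ` K)"
      using assms by (intro compact_imp_closed compact_Union_deck_translates) (auto simp: F'_def)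
    have "y \<in> closure (ball y 1 \<inter> ?S)"
      using that open_Int_closure_subset[of "ball y 1" ?S] by auto
    also have "\<dots> \<subseteq> closure (\<Union>g\<in>F'. g ` K)"
      by (rule closure_mono) (auto simp: F'_def)
    also have "\<dots> = (\<Union>g\<in>F'. g ` K)"
      using closed by (rule closure_closed)
    finally show ?thesis
      by (auto simp: F'_def)
  qed
  then have "closure ?S \<subseteq> ?S"
    by blast
  then show ?thesis
    by (simp add: closure_subset_eq)
qed

end

section \<open>Translation along the invariant line\<close>

lemma line_stabilizer_affine_on_line:
  assumes "f \<in> line_stabilizer {a + t *\<^sub>R v | t. True}"
  obtains d s where "\<And>t. f (a + t *\<^sub>R v) = a + (d + s * t) *\<^sub>R v"
proof -
  let ?l = "{a + t *\<^sub>R v | t. True}"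
  obtain A b where f: "f = (\<lambda>x. A *v x + b)" and "f ` ?l = ?l"
    using assms by (auto simp: line_stabilizer_def aff_auto_def)
  moreover have "a \<in> ?l" "a + v \<in> ?l"
    by (auto intro: exI[of _ 0] exI[of _ 1])
  ultimately obtain d e where d: "f a = a + d *\<^sub>R v" and e: "f (a + v) = a + e *\<^sub>R v"
    by blast
  have "A *v v = f (a + v) - f a"
    by (simp add: f matrix_vector_right_distrib)
  then have Av: "A *v v = (e - d) *\<^sub>R v"
    using d e by (simp add: algebra_simps)
  have "f (a + t *\<^sub>R v) = a + (d + (e - d) * t) *\<^sub>R v" for t
  proof -
    have "f (a + t *\<^sub>R v) = f a + t *\<^sub>R (A *v v)"
      by (simp add: f matrix_vector_right_distrib matrix_vector_mult_scaleR)
    then show ?thesis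
      using d Av by (simp add: algebra_simps)
  qed
  with that show thesis
    by blast
qed

locale line_preserving_covering = euclidean_covering p
  for p :: "real^'n::finite \<Rightarrow> 'm::topological_space" +
  fixes a v :: "real^'n"
  assumes direction_nonzero: "v \<noteq> 0"
    and holonomy_preserves_line: "\<Gamma> \<subseteq> line_stabilizer {a + t *\<^sub>R v | t. True}"
begin

lemma deck_translates_line:
  assumes "g \<in> \<Gamma>"
  shows "\<exists>d. \<forall>t. g (a + t *\<^sub>R v) = a + (t + d) *\<^sub>R v"
proof -
  obtain d s where g: "\<And>t. g (a + t *\<^sub>R v) = a + (d + s * t) *\<^sub>R v"
    using assms holonomy_preserves_line line_stabilizer_affine_on_line by blast
  show ?thesis
  proof (cases "s = 1")
    case True
    with g show ?thesis
      by (auto simp: add.commute)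
  next
    case False
    define t0 where "t0 = d / (1 - s)"
    have "d + s * t0 = t0"
      using False by (simp add: t0_def field_simps)
    then have "g = id"
      using g[of t0] deck_fixpoint_imp_id[OF assms] by simp
    then show ?thesis
      by auto
  qed
qed

definition line_shift :: "(real^'n \<Rightarrow> real^'n) \<Rightarrow> real" where
  "line_shift g = (SOME d. \<forall>t. g (a + t *\<^sub>R v) = a + (t + d) *\<^sub>R v)"

lemma line_shift: "g \<in> \<Gamma> \<Longrightarrow> g (a + t *\<^sub>R v) = a + (t + line_shift g) *\<^sub>R v"
  using someI_ex[OF deck_translates_line] unfolding line_shift_def by blast

lemma line_shift_unique:
  assumes "g \<in> \<Gamma>" "g (a + t *\<^sub>R v) = a + (t + d) *\<^sub>R v"
  shows "line_shift g = d"
  using assms line_shift[OF assms(1), of t] direction_nonzero by simp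

lemma line_shift_comp:
  assumes "g \<in> \<Gamma>" "h \<in> \<Gamma>"
  shows "line_shift (g \<circ> h) = line_shift g + line_shift h"
proof (rule line_shift_unique[where t = 0])
  show "g \<circ> h \<in> \<Gamma>"
    using assms by (rule deck_comp)
  have "h a = a + line_shift h *\<^sub>R v"
    using line_shift[OF assms(2), of 0] by simp
  then show "(g \<circ> h) (a + 0 *\<^sub>R v) = a + (0 + (line_shift g + line_shift h)) *\<^sub>R v"
    using line_shift[OF assms(1), of "line_shift h"] by (simp add: algebra_simps)
qed

lemma line_shift_inv:
  assumes "g \<in> \<Gamma>"
  shows "line_shift (inv g) = - line_shift g"
proof -
  have "inv g \<circ> g = id"
    using deck_inv(2)[OF assms] by (simp add: fun_eq_iff)
  then have "line_shift (inv g) + line_shift g = line_shift id"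
    using line_shift_comp[OF deck_inv(1)[OF assms] assms] by simp
  also have "line_shift id = 0"
    by (rule line_shift_unique[where t = 0]) (simp_all add: id_in_holonomy_group)
  finally show ?thesis
    by simp
qed

lemma line_shift_near_parameter:
  assumes "g \<in> \<Gamma>" "a + t *\<^sub>R v \<in> g ` cball 0 R"
  shows "\<bar>line_shift g - t\<bar> \<le> (R + norm a) / norm v"
proof -
  obtain k where "k \<in> cball 0 R" "g k = a + t *\<^sub>R v"
    using assms(2) by (metis imageE)
  have "k = inv g (a + t *\<^sub>R v)"
    using deck_inv(2)[OF assms(1), of k] \<open>g k = a + t *\<^sub>R v\<close> by simp
  also have "\<dots> = a + (t - line_shift g) *\<^sub>R v"
    using line_shift[OF deck_inv(1)[OF assms(1)], of t] line_shift_inv[OF assms(1)] by simp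
  finally have "k - a = (t - line_shift g) *\<^sub>R v"
    by simp
  then have "\<bar>line_shift g - t\<bar> * norm v = norm (k - a)"
    by (simp add: abs_minus_commute)
  also have "\<dots> \<le> R + norm a"
    using \<open>k \<in> cball 0 R\<close> norm_triangle_ineq4[of k a] by simp
  finally show ?thesis
    using direction_nonzero by (simp add: field_simps)
qed

definition translates_with_shift :: "(real \<Rightarrow> bool) \<Rightarrow> (real^'n) set \<Rightarrow> (real^'n) set" where
  "translates_with_shift P K = (\<Union>g\<in>{g \<in> \<Gamma>. P (line_shift g)}. g ` K)"

lemma translates_with_shiftI:
  "g \<in> \<Gamma> \<Longrightarrow> P (line_shift g) \<Longrightarrow> x \<in> g ` K \<Longrightarrow> x \<in> translates_with_shift P K"
  unfolding translates_with_shift_def by blast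

lemma translates_with_shift_mono:
  "(\<And>d. P d \<Longrightarrow> Q d) \<Longrightarrow> translates_with_shift P K \<subseteq> translates_with_shift Q K"
  unfolding translates_with_shift_def by blast

lemma translates_with_shift_trichotomy:
  assumes "\<forall>x. \<exists>g\<in>\<Gamma>. x \<in> g ` K"
  shows "translates_with_shift (\<lambda>d. \<bar>d\<bar> \<le> T) K \<union> translates_with_shift (\<lambda>d. d > T) K
           \<union> translates_with_shift (\<lambda>d. d < - T) K = UNIV"
proof -
  have "x \<in> translates_with_shift (\<lambda>d. \<bar>d\<bar> \<le> T) K \<union> translates_with_shift (\<lambda>d. d > T) K
           \<union> translates_with_shift (\<lambda>d. d < - T) K" for x
  proof -
    obtain g where "g \<in> \<Gamma>" "x \<in> g ` K"
      using assms by blast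
    consider "\<bar>line_shift g\<bar> \<le> T" | "line_shift g > T" | "line_shift g < - T"
      by linarith
    then show ?thesis
    proof cases
      case 1
      have "x \<in> translates_with_shift (\<lambda>d. \<bar>d\<bar> \<le> T) K"
        using \<open>g \<in> \<Gamma>\<close> 1 \<open>x \<in> g ` K\<close> by (rule translates_with_shiftI)
      then show ?thesis
        by blast
    next
      case 2
      have "x \<in> translates_with_shift (\<lambda>d. d > T) K"
        using \<open>g \<in> \<Gamma>\<close> 2 \<open>x \<in> g ` K\<close> by (rule translates_with_shiftI)
      then show ?thesis
        by blast
    next
      case 3
      have "x \<in> translates_with_shift (\<lambda>d. d < - T) K"
        using \<open>g \<in> \<Gamma>\<close> 3 \<open>x \<in> g ` K\<close> by (rule translates_with_shiftI)
      then show ?thesis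
        by blast
    qed
  qed
  then show ?thesis
    by blast
qed

lemma line_point_in_translate_with_close_shift:
  assumes "\<forall>x. \<exists>g\<in>\<Gamma>. x \<in> g ` cball 0 R"
  shows "a + t *\<^sub>R v \<in> translates_with_shift (\<lambda>d. \<bar>d - t\<bar> \<le> (R + norm a) / norm v) (cball 0 R)"
proof -
  obtain g where "g \<in> \<Gamma>" "a + t *\<^sub>R v \<in> g ` cball 0 R"
    using assms by blast
  moreover from this have "\<bar>line_shift g - t\<bar> \<le> (R + norm a) / norm v"
    by (rule line_shift_near_parameter)
  ultimately show ?thesis
    by (intro translates_with_shiftI)
qed

lemma line_ends_in_translates:
  assumes cover: "\<forall>x. \<exists>g\<in>\<Gamma>. x \<in> g ` cball 0 R"
  obtains t where "a + t *\<^sub>R v \<in> translates_with_shift (\<lambda>d. d > T) (cball 0 R) - cball 0 \<rho>"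
    and "a + (- t) *\<^sub>R v \<in> translates_with_shift (\<lambda>d. d < - T) (cball 0 R) - cball 0 \<rho>"
proof -
  define c where "c = (R + norm a) / norm v"
  note on_line = line_point_in_translate_with_close_shift[OF cover, folded c_def]
  define t0 where "t0 = \<bar>T\<bar> + \<bar>c\<bar> + \<bar>\<rho> + norm a\<bar> / norm v + 1"
  have "norm v > 0"
    using direction_nonzero by simp
  have far: "a + t *\<^sub>R v \<notin> cball 0 \<rho>" if "\<bar>t\<bar> = t0" for t
  proof -
    have "\<bar>t\<bar> * norm v = (\<bar>T\<bar> + \<bar>c\<bar> + 1) * norm v + \<bar>\<rho> + norm a\<bar>"
      using that \<open>norm v > 0\<close> by (simp add: t0_def field_simps)
    moreover have "(\<bar>T\<bar> + \<bar>c\<bar> + 1) * norm v > 0"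
      using \<open>norm v > 0\<close> by simp
    ultimately have "\<rho> + norm a < \<bar>t\<bar> * norm v"
      by linarith
    also have "\<dots> \<le> norm (a + t *\<^sub>R v) + norm a"
      using norm_triangle_ineq4[of "a + t *\<^sub>R v" a] by simp
    finally show ?thesis
      by simp
  qed
  have "0 \<le> \<bar>\<rho> + norm a\<bar> / norm v"
    by simp
  then have "t0 > 0" "t0 - c > \<bar>T\<bar>"
    using abs_ge_self[of c] unfolding t0_def by linarith+
  then have "translates_with_shift (\<lambda>d. \<bar>d - t0\<bar> \<le> c) (cball 0 R) \<subseteq> translates_with_shift (\<lambda>d. d > T) (cball 0 R)"
    "translates_with_shift (\<lambda>d. \<bar>d - (- t0)\<bar> \<le> c) (cball 0 R) \<subseteq> translates_with_shift (\<lambda>d. d < - T) (cball 0 R)"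
    by (auto intro!: translates_with_shift_mono simp: abs_le_iff)
  then have "a + t0 *\<^sub>R v \<in> translates_with_shift (\<lambda>d. d > T) (cball 0 R)"
    "a + (- t0) *\<^sub>R v \<in> translates_with_shift (\<lambda>d. d < - T) (cball 0 R)"
    using on_line[of t0] on_line[of "- t0"] by blast+
  moreover have "a + t0 *\<^sub>R v \<notin> cball 0 \<rho>" "a + (- t0) *\<^sub>R v \<notin> cball 0 \<rho>"
    using far[of t0] far[of "- t0"] \<open>t0 > 0\<close> by simp_all
  ultimately have "a + t0 *\<^sub>R v \<in> translates_with_shift (\<lambda>d. d > T) (cball 0 R) - cball 0 \<rho>"
    "a + (- t0) *\<^sub>R v \<in> translates_with_shift (\<lambda>d. d < - T) (cball 0 R) - cball 0 \<rho>"
    by auto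
  then show thesis
    by (rule that)
qed

end

section \<open>The complement of a ball would be disconnected\<close>

locale hausdorff_line_preserving_covering =
  line_preserving_covering p a v + hausdorff_euclidean_covering p
  for p :: "real^'n::finite \<Rightarrow> 'm::topological_space" and a v
begin

lemma line_shift_close:
  assumes "compact K"
  obtains M where "\<And>g h. g \<in> \<Gamma> \<Longrightarrow> h \<in> \<Gamma> \<Longrightarrow> g ` K \<inter> h ` K \<noteq> {} \<Longrightarrow> \<bar>line_shift g - line_shift h\<bar> \<le> M"
proof -
  define N where "N = {f \<in> \<Gamma>. f ` K \<inter> K \<noteq> {}}"
  define M where "M = (\<Sum>f\<in>N. \<bar>line_shift f\<bar>)"
  have "\<bar>line_shift g - line_shift h\<bar> \<le> M" if gh: "g \<in> \<Gamma>" "h \<in> \<Gamma>" "g ` K \<inter> h ` K \<noteq> {}" for g h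
  proof -
    obtain k1 k2 where "k1 \<in> K" "k2 \<in> K" "g k1 = h k2"
      using gh(3) by blast
    then have "(inv h \<circ> g) k1 = k2"
      using deck_inv(2)[OF gh(2)] by simp
    then have hg: "inv h \<circ> g \<in> N"
      using \<open>k1 \<in> K\<close> \<open>k2 \<in> K\<close> deck_comp[OF deck_inv(1)[OF gh(2)] gh(1)] by (auto simp: N_def)
    have "finite N"
      unfolding N_def using assms by (rule deck_properly_discontinuous)
    then have "\<bar>line_shift (inv h \<circ> g)\<bar> \<le> M"
      unfolding M_def by (intro member_le_sum[OF hg]) simp_all
    then show ?thesis
      using gh by (simp add: line_shift_comp deck_inv line_shift_inv)
  qed
  with that show thesis
    by blast
qed

lemma closed_translates_with_shift: "compact K \<Longrightarrow> closed (translates_with_shift P K)"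
  unfolding translates_with_shift_def by (rule closed_Union_deck_translates) auto

lemma bounded_translates_with_bounded_shift:
  assumes "compact K"
  shows "bounded (translates_with_shift (\<lambda>d. \<bar>d\<bar> \<le> T) K)"
proof -
  define B where "B = cball (0::real^'n) (norm a + \<bar>T\<bar> * norm v)"
  have "{g \<in> \<Gamma>. \<bar>line_shift g\<bar> \<le> T} \<subseteq> {g \<in> \<Gamma>. g ` B \<inter> B \<noteq> {}}"
  proof clarify
    fix g assume "g \<in> \<Gamma>" "\<bar>line_shift g\<bar> \<le> T"
    have "g a = a + line_shift g *\<^sub>R v"
      using line_shift[OF \<open>g \<in> \<Gamma>\<close>, of 0] by simp
    then have "norm (g a) \<le> norm a + \<bar>line_shift g\<bar> * norm v"
      by (metis norm_scaleR norm_triangle_ineq)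
    also have "\<dots> \<le> norm a + \<bar>T\<bar> * norm v"
      using \<open>\<bar>line_shift g\<bar> \<le> T\<close> by (intro add_left_mono mult_right_mono) auto
    finally have "g a \<in> B"
      by (simp add: B_def)
    moreover have "a \<in> B"
      by (simp add: B_def)
    ultimately have "g a \<in> g ` B \<inter> B"
      by blast
    then show "g ` B \<inter> B = {} \<Longrightarrow> False"
      by blast
  qed
  moreover have "compact B"
    by (simp add: B_def)
  ultimately have "finite {g \<in> \<Gamma>. \<bar>line_shift g\<bar> \<le> T}"
    by (rule finite_subset[OF _ deck_properly_discontinuous])
  then show ?thesis
    unfolding translates_with_shift_def
    using assms by (intro compact_imp_bounded compact_Union_deck_translates) auto
qed

lemma translates_with_opposite_shifts_disjoint:
  assumes "compact K"
  obtains T where "translates_with_shift (\<lambda>d. d > T) K \<inter> translates_with_shift (\<lambda>d. d < - T) K = {}"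
proof -
  obtain M where M: "\<And>g h. g \<in> \<Gamma> \<Longrightarrow> h \<in> \<Gamma> \<Longrightarrow> g ` K \<inter> h ` K \<noteq> {} \<Longrightarrow> \<bar>line_shift g - line_shift h\<bar> \<le> M"
    using line_shift_close[OF assms] by blast
  have "translates_with_shift (\<lambda>d. d > \<bar>M\<bar>) K \<inter> translates_with_shift (\<lambda>d. d < - \<bar>M\<bar>) K = {}"
    (is "?Sp \<inter> ?Sm = {}")
  proof (rule ccontr)
    assume "?Sp \<inter> ?Sm \<noteq> {}"
    then obtain g h where "g \<in> \<Gamma>" "h \<in> \<Gamma>" "line_shift g > \<bar>M\<bar>" "line_shift h < - \<bar>M\<bar>" "g ` K \<inter> h ` K \<noteq> {}"
      unfolding translates_with_shift_def by blast
    with M[of g h] show False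
      by linarith
  qed
  then show thesis
    by (rule that)
qed

lemma base_not_compact:
  assumes "CARD('n) \<ge> 2"
  shows "\<not> compact (UNIV :: 'm set)"
proof
  assume "compact (UNIV :: 'm set)"
  then obtain R where cover: "\<forall>x. \<exists>g\<in>\<Gamma>. x \<in> g ` cball 0 R"
    by (rule compact_imp_translates_of_cball_cover)
  let ?K = "cball (0::real^'n) R"
  have "compact ?K"
    by simp
  then obtain T where disjoint: "translates_with_shift (\<lambda>d. d > T) ?K \<inter> translates_with_shift (\<lambda>d. d < - T) ?K = {}"
    by (rule translates_with_opposite_shifts_disjoint)
  let ?Sp = "translates_with_shift (\<lambda>d. d > T) ?K" and ?Sm = "translates_with_shift (\<lambda>d. d < - T) ?K"
  obtain \<rho> where "\<forall>x \<in> translates_with_shift (\<lambda>d. \<bar>d\<bar> \<le> T) ?K. norm x \<le> \<rho>"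
    using bounded_translates_with_bounded_shift[OF \<open>compact ?K\<close>, of T] unfolding bounded_iff by blast
  then have "translates_with_shift (\<lambda>d. \<bar>d\<bar> \<le> T) ?K \<subseteq> cball 0 \<rho>"
    by auto
  then have outside: "- cball 0 \<rho> \<subseteq> ?Sp \<union> ?Sm"
    using translates_with_shift_trichotomy[OF cover, of T] by blast
  obtain t where "a + t *\<^sub>R v \<in> ?Sp - cball 0 \<rho>" "a + (- t) *\<^sub>R v \<in> ?Sm - cball 0 \<rho>"
    by (rule line_ends_in_translates[OF cover])
  moreover have "connected (- cball (0::real^'n) \<rho>)"
    using assms by (intro connected_complement_bounded_convex) auto
  then have "?Sp \<inter> - cball 0 \<rho> = {} \<or> ?Sm \<inter> - cball 0 \<rho> = {}"
    using disjoint outside closed_translates_with_shift[OF \<open>compact ?K\<close>] by (intro connected_closedD) auto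
  ultimately show False
    by blast
qed

end

theorem theorem1:
  fixes atlas :: "('m::topological_space set \<times> ('m \<Rightarrow> real^'n::finite)) set"
    and p :: "real^'n \<Rightarrow> 'm"
    and l :: "(real^'n) set"
  assumes "CARD('n) \<ge> 2"
    and "closed_manifold_space TYPE('m)"
    and "affine_atlas atlas"
    and "complete_developing_cover atlas p"
    and "affine_line l"
    and "holonomy_group p \<subseteq> line_stabilizer l"
  shows False
proof -
  have "compact (UNIV :: 'm set)"
    and hausdorff: "\<forall>x y::'m. x \<noteq> y \<longrightarrow> (\<exists>U V. open U \<and> open V \<and> x \<in> U \<and> y \<in> V \<and> U \<inter> V = {})"
    using assms(2) unfolding closed_manifold_space_def by blast+
  have covering: "covering_space UNIV p UNIV"
    using assms(4) unfolding complete_developing_cover_def by blast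
  obtain a v where "v \<noteq> 0" and l: "l = {a + t *\<^sub>R v | t. True}"
    using assms(5) unfolding affine_line_def by blast
  interpret hausdorff_line_preserving_covering p a v
    by unfold_locales (use covering \<open>v \<noteq> 0\<close> assms(6) hausdorff in \<open>simp_all add: l\<close>)
  show False
    using base_not_compact[OF assms(1)] \<open>compact (UNIV :: 'm set)\<close> by blast
qed

end
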